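(* Let $S\subseteq[n]$. A matrix $\Delta\in\mathbb{R}^{n\times n}$ with $\Delta e_j=0$ for all $j\notin S$ is a Nash equilibrium for $(M,\Gamma,\Sigma,S)$ if and only if its columns $\delta_k=\Delta e_k$, $k\in S$, solve the system of $n|S|$ linear equations $$T^{(k,k)}\delta_k+\sum_{j\in S,\ j\neq k}T^{(k,j)}\delta_j=y_k\qquad\text{for all }k\in S.$$
   Context: Fix agents $[n]=\{1,\dots,n\}$. Let $\Sigma\in\mathbb{R}^{n\times n}$ be symmetric positive definite, $\Gamma=\mathrm{diag}(\gamma_1,\dots,\gamma_n)$ with all $\gamma_i>0$, and let $M\in\mathbb{R}^{n\times n}$ be the matrix of true beliefs with $i$-th column $\mu_i=Me_i$. For a matrix of reported negotiating positions $M'\in\mathbb{R}^{n\times n}$, the stable point for $M'$ is the unique pair $(W,P)$ of real $n\times n$ matrices with $W=W^T$, $P^T=-P$ and $M'-P=2\Sigma W\Gamma$; equivalently $\mathrm{vec}(W)=\tfrac12(\Gamma\otimes\Sigma+\Sigma\otimes\Gamma)^{-1}\mathrm{vec}(M'+M'^T)$ and $P=M'-2\Sigma W\Gamma$. Here $\mathrm{vec}$ stacks columns and $e_i$ is the $i$-th standard basis vector. Agent $i$'s (true) utility at $(W,P)$ is $g_i(W,P)=w_i^T(\mu_i-Pe_i)-\gamma_i\, w_i^T\Sigma w_i$, where $w_i=We_i$. $S\subseteq[n]$ is the set of strategic agents; honest agents $i\notin S$ report $\mu_i'=\mu_i$. A Nash equilibrium for $(M,\Gamma,\Sigma,S)$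 is a matrix $\Delta$ with $\Delta e_j=0$ for $j\notin S$ such that for each $k\in S$, when every $j\in S\setminus\{k\}$ reports $(M+\Delta)e_j$, agent $k$'s utility at the stable point is maximized (over all reports $\mu_k'\in\mathbb{R}^n$) by reporting $(M+\Delta)e_k$. Matrices: $\Pi\in\mathbb{R}^{n^2\times n^2}$ is the commutation matrix, $\Pi\,\mathrm{vec}(X)=\mathrm{vec}(X^T)$; $\Pi_k\in\mathbb{R}^{n\times n^2}$ satisfies $\Pi_k\mathrm{vec}(X)=Xe_k$. For $Z\in\mathbb{R}^{n^2\times n^2}$, $Z^{(p,q)}$ is its $n\times n$ block in block-row $p$ and block-column $q$. Set $K=\Gamma\otimes\Sigma+\Sigma\otimes\Gamma$, $L=\tfrac12(K^{-1}+K^{-1}\Pi)$, $T^{(k,k)}=L^{(k,k)}+(L^{(k,k)})^T-2\gamma_k(L^{(k,k)})^T\Sigma L^{(k,k)}$, $T^{(k,j)}=(I-2\gamma_k(L^{(k,k)})^T\Sigma)L^{(k,j)}$ for $j\neq k$, and $y_k=\tfrac12\big(2\gamma_k(L^{(k,k)})^T\Sigma-I\big)\Pi_kK^{-1}\mathrm{vec}(M+M^T)$. *)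

theory Defs
  imports "HOL-Analysis.Analysis"
begin

text \<open>Agents are the elements of a finite type 'n (so [n] ~ UNIV :: 'n set, n = CARD('n)).
  n x n matrices are real^'n^'n; vectors of length n^2 are real^('n \<times> 'n), where the
  index (i,j) corresponds to the entry X_{ij}, i.e. vec stacks columns.
  A matrix Z of size n^2 x n^2 is real^('n\<times>'n)^('n\<times>'n); its block (p,q) has
  entries Z_{(a,p),(b,q)}.\<close>

definition vecm :: "real^'n::finite^'n \<Rightarrow> real^('n \<times> 'n)" where
  "vecm X = (\<chi> ij. X $ fst ij $ snd ij)"

text \<open>Kronecker product A \<otimes> B: block (p,q) equals A_{pq} B.\<close>
definition kron :: "real^'n::finite^'n \<Rightarrow> real^'n^'n \<Rightarrow> real^('n \<times> 'n)^('n \<times> 'n)" where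
  "kron A B = (\<chi> ip. \<chi> jq. A $ snd ip $ snd jq * B $ fst ip $ fst jq)"

text \<open>Commutation matrix: Pi *v vecm X = vecm (transpose X).\<close>
definition commut :: "real^('n::finite \<times> 'n)^('n \<times> 'n)" where
  "commut = (\<chi> ij. \<chi> kl. if kl = (snd ij, fst ij) then 1 else 0)"

text \<open>Pi_k: Pi_k *v vecm X = X e_k.\<close>
definition commut_k :: "'n::finite \<Rightarrow> real^('n \<times> 'n)^'n" where
  "commut_k k = (\<chi> i. \<chi> jl. if jl = (i, k) then 1 else 0)"

definition blk :: "real^('n \<times> 'n)^('n \<times> 'n) \<Rightarrow> 'n \<Rightarrow> 'n \<Rightarrow> real^'n^'n" where
  "blk Z p q = (\<chi> a. \<chi> b. Z $ (a, p) $ (b, q))"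

definition unvec :: "real^('n \<times> 'n) \<Rightarrow> real^'n^'n" where
  "unvec v = (\<chi> i. \<chi> j. v $ (i, j))"

definition Kmat :: "real^'n::finite^'n \<Rightarrow> real^'n^'n \<Rightarrow> real^('n \<times> 'n)^('n \<times> 'n)" where
  "Kmat Gam Sig = kron Gam Sig + kron Sig Gam"

definition stableW :: "real^'n::finite^'n \<Rightarrow> real^'n^'n \<Rightarrow> real^'n^'n \<Rightarrow> real^'n^'n" where
  "stableW Gam Sig M' =
     unvec ((1/2) *\<^sub>R (matrix_inv (Kmat Gam Sig) *v vecm (M' + transpose M')))"

definition stableP :: "real^'n::finite^'n \<Rightarrow> real^'n^'n \<Rightarrow> real^'n^'n \<Rightarrow> real^'n^'n" where
  "stableP Gam Sig M' = M' - 2 *\<^sub>R (Sig ** stableW Gam Sig M' ** Gam)"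

text \<open>Agent i's true utility g_i(W,P), with gamma_i = Gam_{ii}.\<close>
definition utility :: "real^'n::finite^'n \<Rightarrow> real^'n^'n \<Rightarrow> real^'n^'n \<Rightarrow> 'n
     \<Rightarrow> real^'n::finite^'n \<Rightarrow> real^'n^'n \<Rightarrow> real" where
  "utility M Gam Sig i W P =
     column i W \<bullet> (column i M - column i P) - Gam $ i $ i * (column i W \<bullet> (Sig *v column i W))"

definition util_at :: "real^'n::finite^'n \<Rightarrow> real^'n^'n \<Rightarrow> real^'n^'n \<Rightarrow> 'n \<Rightarrow> real^'n^'n \<Rightarrow> real" where
  "util_at M Gam Sig i M' = utility M Gam Sig i (stableW Gam Sig M') (stableP Gam Sig M')"

definition replace_col :: "real^'n::finite^'n \<Rightarrow> 'n \<Rightarrow> real^'n \<Rightarrow> real^'n^'n" where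
  "replace_col A k v = (\<chi> i. \<chi> j. if j = k then v $ i else A $ i $ j)"

definition nash_eq :: "real^'n::finite^'n \<Rightarrow> real^'n^'n \<Rightarrow> real^'n^'n \<Rightarrow> 'n set \<Rightarrow> real^'n^'n \<Rightarrow> bool" where
  "nash_eq M Gam Sig S Delta \<longleftrightarrow>
     (\<forall>j. j \<notin> S \<longrightarrow> column j Delta = 0) \<and>
     (\<forall>k\<in>S. \<forall>mu'. util_at M Gam Sig k (replace_col (M + Delta) k mu')
                    \<le> util_at M Gam Sig k (M + Delta))"

definition Lmat :: "real^'n::finite^'n \<Rightarrow> real^'n^'n \<Rightarrow> real^('n \<times> 'n)^('n \<times> 'n)" where
  "Lmat Gam Sig = (1/2) *\<^sub>R (matrix_inv (Kmat Gam Sig) + matrix_inv (Kmat Gam Sig) ** commut)"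

definition Tblk :: "real^'n::finite^'n \<Rightarrow> real^'n^'n \<Rightarrow> 'n \<Rightarrow> 'n \<Rightarrow> real^'n^'n" where
  "Tblk Gam Sig k j =
     (let L = Lmat Gam Sig; Lkk = blk L k k; g = Gam $ k $ k in
      if j = k then Lkk + transpose Lkk - (2 * g) *\<^sub>R (transpose Lkk ** Sig ** Lkk)
      else (mat 1 - (2 * g) *\<^sub>R (transpose Lkk ** Sig)) ** blk L k j)"

definition yvec :: "real^'n::finite^'n \<Rightarrow> real^'n^'n \<Rightarrow> real^'n^'n \<Rightarrow> 'n \<Rightarrow> real^'n" where
  "yvec M Gam Sig k =
     (let Lkk = blk (Lmat Gam Sig) k k; g = Gam $ k $ k in
      (1/2) *\<^sub>R (((2 * g) *\<^sub>R (transpose Lkk ** Sig) - mat 1) ** commut_k k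
                   ** matrix_inv (Kmat Gam Sig)) *v vecm (M + transpose M))"

end

theory Submission
  imports Defs
begin

(* Write F V = Sig V Gam + Gam V Sig (the operator whose vectorisation is K), so that the stable
   W for reports M' solves F W = (M' + M'^T)/2. The quadratic form <V, F V> is a positively
   weighted sum of Sig-norms of the rows and columns of V; hence K is invertible and W is
   symmetric. Column k of W depends affinely on agent k's report through the block L^(k,k),
   and the same quadratic form, evaluated at the stable point of the report x e_k^T, shows that
   agent k's utility is a strictly concave quadratic function of its report. So a report is a
   best response iff the gradient vanishes, and with M' = M + Delta the gradient of agent k is,
   up to sign, the residual of the k-th block row of the linear system. *)

lemma sum_UNIV_pairs:
  "(\<Sum>ij\<in>(UNIV::('n::finite \<times> 'n) set). f ij) = (\<Sum>i\<in>UNIV. \<Sum>j\<in>UNIV. f (i, j))"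
  unfolding sum.cartesian_product UNIV_Times_UNIV by simp

lemma matrix_matrix_mult_entry: "(A ** B) $ i $ j = (\<Sum>k\<in>UNIV. A $ i $ k * B $ k $ j)"
  by (simp add: matrix_matrix_mult_def)

lemma matrix_vector_mult_entry: "(A *v x) $ i = (\<Sum>k\<in>UNIV. A $ i $ k * x $ k)"
  by (simp add: matrix_vector_mult_def)

lemma transpose_add: "transpose (A + B) = transpose A + transpose (B::'a::semiring_1^'n^'m)"
  by (simp add: transpose_def vec_eq_iff)

lemma inner_transpose_mult: "(h::real^'n::finite) \<bullet> (transpose A *v y) = (A *v h) \<bullet> y"
  by (simp add: dot_lmul_matrix[symmetric] inner_commute)

subsection \<open>Vectorisation\<close>

lemma vecm_eq_iff: "vecm X = vecm Y \<longleftrightarrow> X = Y"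
  by (auto simp: vecm_def vec_eq_iff)

lemma vecm_zero [simp]: "vecm 0 = 0"
  by (simp add: vecm_def vec_eq_iff)

lemma vecm_add: "vecm (X + Y) = vecm X + vecm Y"
  by (simp add: vecm_def vec_eq_iff)

lemma vecm_diff: "vecm (X - Y) = vecm X - vecm Y"
  by (simp add: vecm_def vec_eq_iff)

lemma vecm_scaleR: "vecm (c *\<^sub>R X) = c *\<^sub>R vecm X"
  by (simp add: vecm_def vec_eq_iff)

lemma vecm_unvec [simp]: "vecm (unvec u) = u"
  by (simp add: vecm_def unvec_def vec_eq_iff)

lemma unvec_eq_zero_iff: "unvec u = 0 \<longleftrightarrow> u = 0"
proof
  assume "unvec u = 0"
  then show "u = 0" using vecm_unvec[of u] by simp
qed (simp add: unvec_def vec_eq_iff)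

lemma unvec_add: "unvec (u + v) = unvec u + unvec v"
  by (simp add: unvec_def vec_eq_iff)

lemma inner_vecm: "vecm X \<bullet> vecm Y = (\<Sum>i\<in>UNIV. \<Sum>j\<in>UNIV. X $ i $ j * Y $ i $ j)"
  by (simp add: inner_vec_def vecm_def sum_UNIV_pairs)

lemma inner_vecm_transpose: "vecm (transpose X) \<bullet> vecm Y = vecm X \<bullet> vecm (transpose Y)"
  unfolding inner_vecm by (subst sum.swap) (simp add: transpose_def)

lemma Kmat_vecm:
  "Kmat Gam Sig *v vecm V = vecm (Sig ** V ** transpose Gam + Gam ** V ** transpose Sig)"
proof -
  have "(Kmat Gam Sig *v vecm V) $ (a, p)
        = vecm (Sig ** V ** transpose Gam + Gam ** V ** transpose Sig) $ (a, p)" for a p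
  proof -
    have "(Kmat Gam Sig *v vecm V) $ (a, p)
        = (\<Sum>i\<in>UNIV. \<Sum>j\<in>UNIV. (Gam $ p $ j * Sig $ a $ i + Sig $ p $ j * Gam $ a $ i) * V $ i $ j)"
      unfolding matrix_vector_mult_entry sum_UNIV_pairs by (simp add: Kmat_def kron_def vecm_def)
    also have "\<dots> = (\<Sum>j\<in>UNIV. \<Sum>i\<in>UNIV. Sig $ a $ i * V $ i $ j * Gam $ p $ j)
                  + (\<Sum>j\<in>UNIV. \<Sum>i\<in>UNIV. Gam $ a $ i * V $ i $ j * Sig $ p $ j)"
      by (subst sum.swap) (simp add: algebra_simps sum.distrib)
    also have "\<dots> = vecm (Sig ** V ** transpose Gam + Gam ** V ** transpose Sig) $ (a, p)"
      by (simp add: vecm_def matrix_matrix_mult_entry transpose_def sum_distrib_right)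
    finally show ?thesis .
  qed
  then show ?thesis by (simp add: vec_eq_iff)
qed

lemma commut_vecm: "commut *v vecm X = vecm (transpose X)"
  by (simp add: vec_eq_iff commut_def matrix_vector_mult_entry vecm_def transpose_def
      if_distrib if_distribR sum.delta cong: if_cong)

lemma commut_k_mult: "commut_k k *v u = column k (unvec u)"
  by (simp add: vec_eq_iff commut_k_def matrix_vector_mult_entry column_def unvec_def
      if_distrib if_distribR sum.delta cong: if_cong)

lemma Lmat_vecm:
  "Lmat Gam Sig *v vecm X = (1/2) *\<^sub>R (matrix_inv (Kmat Gam Sig) *v vecm (X + transpose X))"
  by (simp add: Lmat_def vecm_add commut_vecm scaleR_matrix_vector_assoc[symmetric]
      matrix_vector_mult_add_rdistrib matrix_vector_mul_assoc[symmetric] matrix_vector_right_distrib)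

lemma column_zero [simp]: "column j (0::'a::zero^'n^'m) = 0"
  by (simp add: column_def vec_eq_iff)

lemma column_replace_col: "column j (replace_col A k x) = (if j = k then x else column j A)"
  by (simp add: column_def replace_col_def vec_eq_iff)

lemma replace_col_column: "replace_col A k (column k A) = A"
  by (simp add: column_def replace_col_def vec_eq_iff)

subsection \<open>Columns of the stable point\<close>

lemma stableW_add: "stableW Gam Sig (X + Y) = stableW Gam Sig X + stableW Gam Sig Y"
  by (simp add: stableW_def transpose_add vecm_add matrix_vector_right_distrib
      scaleR_add_right unvec_add)

lemma column_stableW:
  "column k (stableW Gam Sig X) = (\<Sum>j\<in>UNIV. blk (Lmat Gam Sig) k j *v column j X)"
proof -
  have "column k (stableW Gam Sig X) $ a = (Lmat Gam Sig *v vecm X) $ (a, k)" for a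
    by (simp add: stableW_def Lmat_vecm column_def unvec_def)
  also have "(Lmat Gam Sig *v vecm X) $ (a, k)
      = (\<Sum>j\<in>UNIV. \<Sum>b\<in>UNIV. Lmat Gam Sig $ (a, k) $ (b, j) * X $ b $ j)" for a
    by (simp add: matrix_vector_mult_entry sum_UNIV_pairs vecm_def) (rule sum.swap)
  also have "\<dots> a = (\<Sum>j\<in>UNIV. blk (Lmat Gam Sig) k j *v column j X) $ a" for a
    by (simp add: sum_component matrix_vector_mult_entry blk_def column_def)
  finally show ?thesis by (simp add: vec_eq_iff)
qed

lemma column_stableW_replace_col:
  "column k (stableW Gam Sig (replace_col X k x))
   = blk (Lmat Gam Sig) k k *v x + (\<Sum>j\<in>UNIV - {k}. blk (Lmat Gam Sig) k j *v column j X)"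
proof -
  have "(\<Sum>j\<in>UNIV - {k}. blk (Lmat Gam Sig) k j *v column j (replace_col X k x))
      = (\<Sum>j\<in>UNIV - {k}. blk (Lmat Gam Sig) k j *v column j X)"
    by (intro sum.cong) (auto simp: column_replace_col)
  then show ?thesis
    unfolding column_stableW by (subst sum.remove[of UNIV k]) (auto simp: column_replace_col)
qed

lemma yvec_eq:
  "yvec M Gam Sig k
   = (2 * Gam $ k $ k) *\<^sub>R (transpose (blk (Lmat Gam Sig) k k) *v (Sig *v column k (stableW Gam Sig M)))
     - column k (stableW Gam Sig M)"
proof -
  let ?B = "(2 * Gam $ k $ k) *\<^sub>R (transpose (blk (Lmat Gam Sig) k k) ** Sig) - mat 1"
  have "commut_k k *v ((1/2) *\<^sub>R (matrix_inv (Kmat Gam Sig) *v vecm (M + transpose M)))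
      = column k (stableW Gam Sig M)"
    by (simp add: commut_k_mult stableW_def)
  moreover have "yvec M Gam Sig k
      = ?B *v (commut_k k *v ((1/2) *\<^sub>R (matrix_inv (Kmat Gam Sig) *v vecm (M + transpose M))))"
    by (simp add: yvec_def Let_def scaleR_matrix_vector_assoc[symmetric] matrix_vector_mul_assoc
        matrix_vector_mult_scaleR matrix_mul_assoc del: transpose_matrix_vector)
  ultimately show ?thesis
    by (simp add: matrix_vector_mult_diff_rdistrib scaleR_matrix_vector_assoc[symmetric]
        matrix_vector_mul_assoc[symmetric] del: transpose_matrix_vector)
qed

lemma Tblk_diag_mult:
  "Tblk Gam Sig k k *v v = blk (Lmat Gam Sig) k k *v v + transpose (blk (Lmat Gam Sig) k k) *v v
    - (2 * Gam $ k $ k) *\<^sub>R (transpose (blk (Lmat Gam Sig) k k) *v (Sig *v (blk (Lmat Gam Sig) k k *v v)))"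
  by (simp add: Tblk_def Let_def matrix_vector_mult_add_rdistrib matrix_vector_mult_diff_rdistrib
      scaleR_matrix_vector_assoc[symmetric] matrix_vector_mul_assoc matrix_mul_assoc
      del: transpose_matrix_vector)

lemma Tblk_offdiag_mult:
  assumes "j \<noteq> k"
  shows "Tblk Gam Sig k j *v v = blk (Lmat Gam Sig) k j *v v
    - (2 * Gam $ k $ k) *\<^sub>R (transpose (blk (Lmat Gam Sig) k k) *v (Sig *v (blk (Lmat Gam Sig) k j *v v)))"
  using assms
  by (simp add: Tblk_def Let_def matrix_vector_mult_diff_rdistrib
      scaleR_matrix_vector_assoc[symmetric] matrix_vector_mul_assoc[symmetric]
      del: transpose_matrix_vector)

lemma Tblk_row_eq:
  fixes Gam Sig D :: "real^'n::finite^'n" and k :: 'n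
  assumes "\<And>j. j \<notin> S \<Longrightarrow> column j D = 0"
  defines "A \<equiv> blk (Lmat Gam Sig) k k" and "w \<equiv> column k (stableW Gam Sig D)"
  shows "Tblk Gam Sig k k *v column k D + (\<Sum>j\<in>S - {k}. Tblk Gam Sig k j *v column j D)
       = transpose A *v column k D + w - (2 * Gam $ k $ k) *\<^sub>R (transpose A *v (Sig *v w))"
proof -
  define P where "P v = (2 * Gam $ k $ k) *\<^sub>R (transpose A *v (Sig *v v))" for v
  define R where "R = (\<Sum>j\<in>UNIV - {k}. blk (Lmat Gam Sig) k j *v column j D)"
  have P_add: "P (u + v) = P u + P v" for u v
    by (simp add: P_def matrix_vector_right_distrib scaleR_add_right del: transpose_matrix_vector)
  have P_sum: "P (sum f J) = (\<Sum>j\<in>J. P (f j))" for f and J :: "'a set"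
    by (simp add: P_def vec.sum scaleR_sum_right del: transpose_matrix_vector)
  have "(\<Sum>j\<in>S - {k}. Tblk Gam Sig k j *v column j D) = (\<Sum>j\<in>UNIV - {k}. Tblk Gam Sig k j *v column j D)"
    using assms(1) by (intro sum.mono_neutral_left) (auto, metis matrix_vector_mult_0_right)
  also have "\<dots> = (\<Sum>j\<in>UNIV - {k}. blk (Lmat Gam Sig) k j *v column j D - P (blk (Lmat Gam Sig) k j *v column j D))"
    by (intro sum.cong) (auto simp: Tblk_offdiag_mult P_def A_def simp del: transpose_matrix_vector)
  also have "\<dots> = R - P R"
    by (simp add: R_def sum_subtractf P_sum)
  finally have off: "(\<Sum>j\<in>S - {k}. Tblk Gam Sig k j *v column j D) = R - P R" .
  have "w = A *v column k D + R"
    using column_stableW_replace_col[where X = D and x = "column k D" and k = k and Gam = Gam and Sig = Sig]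
    by (simp add: w_def A_def R_def replace_col_column)
  then show ?thesis
    unfolding off P_def[symmetric] by (simp add: Tblk_diag_mult P_def[symmetric] A_def[symmetric] P_add
        del: transpose_matrix_vector)
qed

subsection \<open>Maximising a concave quadratic\<close>

lemma max_iff_gradient_zero:
  fixes f :: "'a::real_inner \<Rightarrow> real" and Q :: "'a \<Rightarrow> real"
  assumes increment: "\<And>h. f (x0 + h) - f x0 = h \<bullet> r - Q h"
    and Q_pos: "\<And>h. h \<noteq> 0 \<Longrightarrow> Q h > 0"
    and Q_homogeneous: "\<And>t h. Q (t *\<^sub>R h) = t\<^sup>2 * Q h"
  shows "(\<forall>x. f x \<le> f x0) \<longleftrightarrow> r = 0"
proof
  assume max: "\<forall>x. f x \<le> f x0"
  show "r = 0"
  proof (rule ccontr)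
    assume "r \<noteq> 0"
    then have Qr: "Q r > 0" and rr: "r \<bullet> r > 0" using Q_pos by auto
    define t where "t = (r \<bullet> r) / (2 * Q r)"
    have "f (x0 + t *\<^sub>R r) - f x0 = t * (r \<bullet> r) - t\<^sup>2 * Q r"
      by (simp add: increment Q_homogeneous)
    also have "\<dots> = (r \<bullet> r)\<^sup>2 / (4 * Q r)"
      using Qr by (simp add: t_def power2_eq_square field_simps)
    also have "\<dots> > 0" using Qr rr by simp
    finally show False using max[rule_format, of "x0 + t *\<^sub>R r"] by simp
  qed
next
  assume "r = 0"
  show "\<forall>x. f x \<le> f x0"
  proof
    fix x
    have "Q (x - x0) \<ge> 0"
      using Q_pos[of "x - x0"] Q_homogeneous[of 0 "x - x0"] by (cases "x = x0") auto
    moreover have "f x - f x0 = - Q (x - x0)"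
      using increment[of "x - x0"] \<open>r = 0\<close> by simp
    ultimately show "f x \<le> f x0" by simp
  qed
qed

subsection \<open>The Sylvester operator and the stable point\<close>

locale negotiation =
  fixes Sig Gam :: "real^'n::finite^'n"
  assumes Sig_sym: "transpose Sig = Sig"
    and Sig_pd: "\<And>x. x \<noteq> 0 \<Longrightarrow> x \<bullet> (Sig *v x) > 0"
    and Gam_diag: "\<And>i j. i \<noteq> j \<Longrightarrow> Gam $ i $ j = 0"
    and Gam_pos: "\<And>i. Gam $ i $ i > 0"
begin

lemma Sig_commute: "Sig $ j $ i = Sig $ i $ j"
  using arg_cong[where f = "\<lambda>A. A $ i $ j", OF Sig_sym] by (simp add: transpose_def)

lemma Sig_inner_commute: "x \<bullet> (Sig *v y) = y \<bullet> (Sig *v x)"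
proof -
  have "x \<bullet> (Sig *v y) = (Sig *v x) \<bullet> y"
    using inner_transpose_mult[of x Sig y] unfolding Sig_sym .
  then show ?thesis by (simp add: inner_commute)
qed

lemma Sig_nonneg: "x \<bullet> (Sig *v x) \<ge> 0"
  using Sig_pd[of x] by (cases "x = 0") auto

lemma Gam_transpose: "transpose Gam = Gam"
proof -
  have "Gam $ j $ i = Gam $ i $ j" for i j
    using Gam_diag[of i j] Gam_diag[of j i] by (cases "i = j") auto
  then show ?thesis by (simp add: transpose_def vec_eq_iff)
qed

lemma sum_Gam_right: "(\<Sum>k\<in>UNIV. f k * Gam $ k $ b) = f b * Gam $ b $ b"
proof -
  have "(\<Sum>k\<in>UNIV. f k * Gam $ k $ b) = (\<Sum>k\<in>UNIV. if k = b then f b * Gam $ b $ b else 0)"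
    by (rule sum.cong) (auto simp: Gam_diag)
  then show ?thesis by simp
qed

lemma sum_Gam_left: "(\<Sum>k\<in>UNIV. Gam $ a $ k * f k) = Gam $ a $ a * f a"
proof -
  have "(\<Sum>k\<in>UNIV. Gam $ a $ k * f k) = (\<Sum>k\<in>UNIV. if k = a then Gam $ a $ a * f a else 0)"
    by (rule sum.cong) (auto simp: Gam_diag)
  then show ?thesis by simp
qed

lemma Sig_V_Gam_entry: "(Sig ** V ** Gam) $ a $ b = (Sig *v column b V) $ a * Gam $ b $ b"
  by (simp add: matrix_matrix_mult_entry matrix_vector_mult_entry column_def sum_Gam_right)

lemma Gam_V_Sig_entry: "(Gam ** V ** Sig) $ a $ b = Gam $ a $ a * (Sig *v row a V) $ b"
  by (simp add: matrix_matrix_mult_entry matrix_vector_mult_entry row_def sum_Gam_left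
      sum_distrib_left mult_ac Sig_commute)

definition sylvester :: "real^'n^'n \<Rightarrow> real^'n^'n" where
  "sylvester V = Sig ** V ** Gam + Gam ** V ** Sig"

lemma vecm_sylvester: "vecm (sylvester V) = Kmat Gam Sig *v vecm V"
  by (simp add: sylvester_def Kmat_vecm Gam_transpose Sig_sym)

lemma sylvester_transpose: "sylvester (transpose V) = transpose (sylvester V)"
  by (simp add: vec_eq_iff sylvester_def Sig_V_Gam_entry Gam_V_Sig_entry transpose_def
      column_def row_def mult_ac)

lemma Kmat_quadratic_form:
  "vecm V \<bullet> (Kmat Gam Sig *v vecm V)
   = (\<Sum>b\<in>UNIV. Gam $ b $ b * (column b V \<bullet> (Sig *v column b V)))
   + (\<Sum>a\<in>UNIV. Gam $ a $ a * (row a V \<bullet> (Sig *v row a V)))"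
proof -
  have "vecm V \<bullet> vecm (Sig ** V ** Gam)
      = (\<Sum>b\<in>UNIV. Gam $ b $ b * (column b V \<bullet> (Sig *v column b V)))"
    unfolding inner_vecm
    by (subst sum.swap) (simp add: Sig_V_Gam_entry inner_vec_def sum_distrib_left mult_ac column_def)
  moreover have "vecm V \<bullet> vecm (Gam ** V ** Sig)
      = (\<Sum>a\<in>UNIV. Gam $ a $ a * (row a V \<bullet> (Sig *v row a V)))"
    unfolding inner_vecm
    by (simp add: Gam_V_Sig_entry inner_vec_def sum_distrib_left mult_ac row_def)
  ultimately show ?thesis
    by (simp add: vecm_sylvester[symmetric] sylvester_def vecm_add inner_add_right)
qed

lemma Kmat_pos_def:
  assumes "v \<noteq> 0"
  shows "v \<bullet> (Kmat Gam Sig *v v) > 0"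
proof -
  define V where "V = unvec v"
  from assms have "V \<noteq> 0" by (simp add: V_def unvec_eq_zero_iff)
  then obtain b where "column b V \<noteq> 0" by (auto simp: vec_eq_iff column_def)
  then have "0 < (\<Sum>b\<in>UNIV. Gam $ b $ b * (column b V \<bullet> (Sig *v column b V)))"
    by (intro sum_pos2[of _ b]) (auto intro: mult_pos_pos mult_nonneg_nonneg less_imp_le Gam_pos Sig_pd Sig_nonneg)
  moreover have "0 \<le> (\<Sum>a\<in>UNIV. Gam $ a $ a * (row a V \<bullet> (Sig *v row a V)))"
    by (intro sum_nonneg mult_nonneg_nonneg less_imp_le Gam_pos Sig_nonneg)
  ultimately show ?thesis
    using Kmat_quadratic_form[of V] by (simp add: V_def)
qed

lemma Kmat_matrix_inv: "Kmat Gam Sig ** matrix_inv (Kmat Gam Sig) = mat 1"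
proof -
  have "inj ((*v) (Kmat Gam Sig))"
  proof (rule injI)
    fix u v assume "Kmat Gam Sig *v u = Kmat Gam Sig *v v"
    then have "(u - v) \<bullet> (Kmat Gam Sig *v (u - v)) = 0"
      by (simp add: matrix_vector_mult_diff_distrib)
    then show "u = v" using Kmat_pos_def[of "u - v"] by fastforce
  qed
  then have "invertible (Kmat Gam Sig)"
    using matrix_left_invertible_injective invertible_left_inverse by blast
  then show ?thesis
    unfolding matrix_inv_def invertible_def by (rule someI_ex[THEN conjunct1])
qed

lemma sylvester_eq_zero_iff: "sylvester V = 0 \<longleftrightarrow> V = 0"
proof
  assume "sylvester V = 0"
  then have "vecm V \<bullet> (Kmat Gam Sig *v vecm V) = 0"
    by (simp add: vecm_sylvester[symmetric])
  then have "vecm V = 0" using Kmat_pos_def by fastforce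
  then show "V = 0" by (simp add: vecm_eq_iff[symmetric])
qed (simp add: sylvester_def)

lemma sylvester_diff: "sylvester (V - U) = sylvester V - sylvester U"
  by (simp add: vecm_eq_iff[symmetric] vecm_sylvester vecm_diff matrix_vector_mult_diff_distrib)

lemma sylvester_stableW: "sylvester (stableW Gam Sig X) = (1/2) *\<^sub>R (X + transpose X)"
proof -
  have "vecm (sylvester (stableW Gam Sig X))
      = (1/2) *\<^sub>R ((Kmat Gam Sig ** matrix_inv (Kmat Gam Sig)) *v vecm (X + transpose X))"
    by (simp add: vecm_sylvester stableW_def matrix_vector_mult_scaleR matrix_vector_mul_assoc)
  also have "\<dots> = vecm ((1/2) *\<^sub>R (X + transpose X))"
    by (simp add: Kmat_matrix_inv vecm_scaleR)
  finally show ?thesis unfolding vecm_eq_iff .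
qed

lemma stableW_symmetric: "transpose (stableW Gam Sig X) = stableW Gam Sig X"
proof -
  have "transpose ((1/2) *\<^sub>R (X + transpose X)) = (1/2) *\<^sub>R (X + transpose X)"
    by (simp only: transpose_scalar transpose_add transpose_transpose add.commute)
  then have "sylvester (transpose (stableW Gam Sig X) - stableW Gam Sig X) = 0"
    by (simp add: sylvester_diff sylvester_transpose sylvester_stableW)
  then show ?thesis unfolding sylvester_eq_zero_iff by simp
qed

subsection \<open>Best responses\<close>

lemma util_at_eq:
  "util_at M Gam Sig k X
   = column k (stableW Gam Sig X) \<bullet> (column k M - column k X)
     + Gam $ k $ k * (column k (stableW Gam Sig X) \<bullet> (Sig *v column k (stableW Gam Sig X)))"
proof -
  let ?w = "column k (stableW Gam Sig X)"
  have "column k (Sig ** stableW Gam Sig X ** Gam) = Gam $ k $ k *\<^sub>R (Sig *v ?w)"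
    by (simp add: vec_eq_iff column_def[of k "Sig ** _ ** Gam"] Sig_V_Gam_entry mult.commute)
  then have P_col: "column k (stableP Gam Sig X) = column k X - (2 * Gam $ k $ k) *\<^sub>R (Sig *v ?w)"
    by (simp add: stableP_def vec_eq_iff column_def)
  show ?thesis
    unfolding util_at_def utility_def P_col by (simp add: inner_diff_right algebra_simps)
qed

(* Test with the report matrix X = x e_k^T: its stable W is symmetric with column k equal to w,
   and the quadratic form of K at W equals both x . w and 2 S, where S is the Gam-weighted sum
   of the Sig-norms of the columns of W. *)
lemma diag_block_quadratic_pos:
  fixes x :: "real^'n" and k :: 'n
  assumes "x \<noteq> 0"
  defines "w \<equiv> blk (Lmat Gam Sig) k k *v x"
  shows "x \<bullet> w - Gam $ k $ k * (w \<bullet> (Sig *v w)) > 0"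
proof -
  define X where "X = replace_col 0 k x"
  define W where "W = stableW Gam Sig X"
  define S where "S = (\<Sum>b\<in>UNIV. Gam $ b $ b * (column b W \<bullet> (Sig *v column b W)))"
  have w_col: "column k W = w"
    using column_stableW_replace_col[where X = 0 and x = x and k = k and Gam = Gam and Sig = Sig]
    by (simp add: W_def X_def w_def column_zero)
  have W_sym: "transpose W = W" unfolding W_def by (rule stableW_symmetric)
  have "vecm W \<bullet> (Kmat Gam Sig *v vecm W) = (1/2) * (vecm W \<bullet> vecm X + vecm W \<bullet> vecm (transpose X))"
    by (simp add: vecm_sylvester[symmetric] W_def sylvester_stableW vecm_scaleR vecm_add inner_add_right)
  also have "vecm W \<bullet> vecm (transpose X) = vecm W \<bullet> vecm X"
    using inner_vecm_transpose[of W X] W_sym by simp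
  also have "vecm W \<bullet> vecm X = (\<Sum>a\<in>UNIV. W $ a $ k * x $ a)"
    by (simp add: inner_vecm X_def replace_col_def if_distrib[where f = "times _"] cong: if_cong)
  also have "\<dots> = x \<bullet> w"
    by (simp add: inner_vec_def w_col[symmetric] column_def mult.commute)
  finally have quad_x: "vecm W \<bullet> (Kmat Gam Sig *v vecm W) = x \<bullet> w" by simp
  have "row a W = column a W" for a
    using W_sym by (metis column_transpose)
  then have quad_S: "vecm W \<bullet> (Kmat Gam Sig *v vecm W) = 2 * S"
    by (simp add: Kmat_quadratic_form S_def)
  have "W \<noteq> 0"
  proof
    assume "W = 0"
    then have "X + transpose X = 0"
      using sylvester_stableW[of X] by (simp add: W_def[symmetric] sylvester_def)
    then have entry: "(X + transpose X) $ a $ k = 0" for a by simp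
    have "x $ a = 0" for a
      using entry[of a] by (cases "a = k") (auto simp: X_def replace_col_def transpose_def zero_index)
    with assms(1) show False by (simp add: vec_eq_iff)
  qed
  then have "S > 0"
    using Kmat_pos_def[of "vecm W"] quad_S by (simp add: vecm_eq_iff[symmetric])
  moreover have "Gam $ k $ k * (w \<bullet> (Sig *v w)) \<le> S"
    unfolding S_def w_col[symmetric]
    by (rule member_le_sum) (auto intro: mult_nonneg_nonneg less_imp_le Gam_pos Sig_nonneg)
  ultimately show ?thesis using quad_x quad_S by simp
qed

lemma best_response_iff:
  fixes M X :: "real^'n^'n" and k :: 'n
  defines "A \<equiv> blk (Lmat Gam Sig) k k" and "w \<equiv> column k (stableW Gam Sig X)"
  shows "(\<forall>x. util_at M Gam Sig k (replace_col X k x) \<le> util_at M Gam Sig k X)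
     \<longleftrightarrow> transpose A *v (column k M - column k X) - w + (2 * Gam $ k $ k) *\<^sub>R (transpose A *v (Sig *v w)) = 0"
    (is "_ \<longleftrightarrow> ?r = 0")
proof -
  define g where "g = Gam $ k $ k"
  define c where "c = (\<Sum>j\<in>UNIV - {k}. blk (Lmat Gam Sig) k j *v column j X)"
  define f where "f x = util_at M Gam Sig k (replace_col X k x)" for x
  define Q where "Q h = h \<bullet> (A *v h) - g * ((A *v h) \<bullet> (Sig *v (A *v h)))" for h
  have f_eq: "f x = (A *v x + c) \<bullet> (column k M - x) + g * ((A *v x + c) \<bullet> (Sig *v (A *v x + c)))" for x
    using util_at_eq[of M k "replace_col X k x"]
    by (simp add: f_def column_stableW_replace_col column_replace_col A_def c_def g_def)
  have w_eq: "w = A *v column k X + c"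
    using column_stableW_replace_col[where X = X and x = "column k X" and k = k and Gam = Gam and Sig = Sig]
    by (simp add: w_def A_def c_def replace_col_column)
  have "f (column k X + h) - f (column k X) = h \<bullet> ?r - Q h" for h
  proof -
    define a where "a = A *v h"
    define u where "u = column k M - column k X"
    have "f (column k X) = w \<bullet> u + g * (w \<bullet> (Sig *v w))"
      using f_eq[of "column k X"] by (simp add: w_eq u_def)
    moreover have "f (column k X + h) = (w + a) \<bullet> (u - h) + g * ((w + a) \<bullet> (Sig *v (w + a)))"
      using f_eq[of "column k X + h"]
      by (simp add: w_eq a_def u_def matrix_vector_right_distrib algebra_simps)
    moreover have "h \<bullet> ?r = a \<bullet> u - h \<bullet> w + 2 * g * (a \<bullet> (Sig *v w))"
      by (simp add: a_def u_def g_def inner_diff_right inner_add_right inner_transpose_mult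
          del: transpose_matrix_vector)
    moreover have "w \<bullet> (Sig *v a) = a \<bullet> (Sig *v w)"
      by (rule Sig_inner_commute)
    ultimately show ?thesis
      unfolding Q_def a_def[symmetric]
      by (simp add: inner_add_left inner_add_right inner_diff_right matrix_vector_right_distrib
          algebra_simps inner_commute[of h])
  qed
  moreover have "Q h > 0" if "h \<noteq> 0" for h
    using diag_block_quadratic_pos[OF that] by (simp add: Q_def A_def g_def)
  moreover have "Q (t *\<^sub>R h) = t\<^sup>2 * Q h" for t h
    by (simp add: Q_def matrix_vector_mult_scaleR power2_eq_square algebra_simps)
  ultimately have "(\<forall>x. f x \<le> f (column k X)) \<longleftrightarrow> ?r = 0"
    by (rule max_iff_gradient_zero)
  then show ?thesis by (simp add: f_def replace_col_column)
qed

lemma best_response_iff_Tblk_row: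
  assumes "\<And>j. j \<notin> S \<Longrightarrow> column j Delta = 0"
  shows "(\<forall>x. util_at M Gam Sig k (replace_col (M + Delta) k x) \<le> util_at M Gam Sig k (M + Delta))
     \<longleftrightarrow> Tblk Gam Sig k k *v column k Delta + (\<Sum>j\<in>S - {k}. Tblk Gam Sig k j *v column j Delta)
         = yvec M Gam Sig k"
proof -
  define A where "A = blk (Lmat Gam Sig) k k"
  define P where "P v = (2 * Gam $ k $ k) *\<^sub>R (transpose A *v (Sig *v v))" for v
  define wM where "wM = column k (stableW Gam Sig M)"
  define wD where "wD = column k (stableW Gam Sig Delta)"
  have "column k (stableW Gam Sig (M + Delta)) = wM + wD"
    by (simp add: stableW_add wM_def wD_def column_def vec_eq_iff)
  moreover have "column k (M + Delta) = column k M + column k Delta"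
    by (simp add: column_def vec_eq_iff)
  ultimately have "transpose A *v (column k M - column k (M + Delta))
        - column k (stableW Gam Sig (M + Delta)) + P (column k (stableW Gam Sig (M + Delta)))
      = (P wM - wM) - (transpose A *v column k Delta + wD - P wD)"
    by (simp add: P_def matrix_vector_right_distrib vec.neg algebra_simps
        del: transpose_matrix_vector)
  moreover have "Tblk Gam Sig k k *v column k Delta + (\<Sum>j\<in>S - {k}. Tblk Gam Sig k j *v column j Delta)
      = transpose A *v column k Delta + wD - P wD"
    using Tblk_row_eq[OF assms] by (simp add: A_def P_def wD_def)
  moreover have "yvec M Gam Sig k = P wM - wM"
    by (simp add: yvec_eq P_def A_def wM_def del: transpose_matrix_vector)
  ultimately show ?thesis
    unfolding best_response_iff P_def[symmetric] A_def[symmetric]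
    by (simp add: eq_commute[where a = "P wM - wM"])
qed

end

theorem mainTheorem7:
  fixes M Sig Gam Delta :: "real^'n^'n" and S :: "'n set"
  assumes Sig_sym: "transpose Sig = Sig"
    and Sig_pd: "\<And>x. x \<noteq> 0 \<Longrightarrow> x \<bullet> (Sig *v x) > 0"
    and Gam_diag: "\<And>i j. i \<noteq> j \<Longrightarrow> Gam $ i $ j = 0"
    and Gam_pos: "\<And>i. Gam $ i $ i > 0"
    and Delta_supp: "\<And>j. j \<notin> S \<Longrightarrow> column j Delta = 0"
  shows "nash_eq M Gam Sig S Delta \<longleftrightarrow>
    (\<forall>k\<in>S. Tblk Gam Sig k k *v column k Delta
             + (\<Sum>j\<in>S - {k}. Tblk Gam Sig k j *v column j Delta)
           = yvec M Gam Sig k)"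
proof -
  interpret negotiation Sig Gam
    using Sig_sym Sig_pd Gam_diag Gam_pos by unfold_locales
  show ?thesis
    unfolding nash_eq_def using best_response_iff_Tblk_row[OF Delta_supp] Delta_supp by blast
qed

end
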